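(* Let $R=k[x_1,\dots,x_n]$ be a polynomial ring over a field $k$, let $I$ be an unmixed monomial ideal of $R$, let $\mathbf a\in\mathbb{Z}^n$, and let $F\subseteq[n]$ with $G_{\mathbf a}\subseteq F$. Then $F\setminus G_{\mathbf a}$ is a facet of $\Delta_{\mathbf a}(I)$ if and only if $F\in\mathcal F(I)$ and $x^{\mathbf a_+}\notin I_F$.
   Context: An ideal is unmixed if every associated prime is a minimal prime. For $\mathbf a=(a_1,\dots,a_n)\in\mathbb{Z}^n$ write $x^{\mathbf a}=x_1^{a_1}\cdots x_n^{a_n}$, $G_{\mathbf a}=\{i\in[n]\mid a_i<0\}$ with $[n]=\{1,\dots,n\}$, and let $\mathbf a_+$ be obtained from $\mathbf a$ by replacing every negative coordinate by $0$. For $F\subseteq[n]$ let $R_F=R[x_i^{-1}\mid i\in F]$ and let $P_F$ be the ideal generated by the variables $x_i$ with $i\notin F$. The degree complex is $\Delta_{\mathbf a}(I)=\{F\setminus G_{\mathbf a} \mid G_{\mathbf a}\subseteq F\subseteq[n],\ x^{\mathbf a}\notin IR_F\}$, a simplicial complex on $[n]$. $\mathcal F(I)$ is the set of all $F\subseteq[n]$ such that $P_F$ is a minimal prime of $I$, and for $F\in\mathcal F(I)$, $I_F$ denotes the primary component of $I$ associated with $P_F$. *)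

theory Defs
  imports Main "HOL-Library.Poly_Mapping"
begin

(* The polynomial ring R = k[x_i | i in V] over a field k, with a finite type 'v of
  variables (so [n] = UNIV :: 'v set, n = CARD('v)). *)

type_synonym ('v, 'k) mpoly = "('v \<Rightarrow>\<^sub>0 nat) \<Rightarrow>\<^sub>0 'k"

definition mon :: "('v \<Rightarrow>\<^sub>0 nat) \<Rightarrow> ('v, 'k::field) mpoly" where
  "mon e = Poly_Mapping.single e 1"

definition var :: "'v \<Rightarrow> ('v, 'k::field) mpoly" where
  "var i = mon (Poly_Mapping.single i 1)"

definition is_ideal :: "('v, 'k::field) mpoly set \<Rightarrow> bool" where
  "is_ideal I \<longleftrightarrow> 0 \<in> I \<and> (\<forall>f\<in>I. \<forall>g\<in>I. f + g \<in> I) \<and> (\<forall>r. \<forall>f\<in>I. r * f \<in> I)"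

definition ideal_gen :: "('v, 'k::field) mpoly set \<Rightarrow> ('v, 'k) mpoly set" where
  "ideal_gen S = \<Inter>{J. is_ideal J \<and> S \<subseteq> J}"

definition is_prime_ideal :: "('v, 'k::field) mpoly set \<Rightarrow> bool" where
  "is_prime_ideal P \<longleftrightarrow> is_ideal P \<and> P \<noteq> UNIV \<and> (\<forall>f g. f * g \<in> P \<longrightarrow> f \<in> P \<or> g \<in> P)"

definition monomial_ideal :: "('v, 'k::field) mpoly set \<Rightarrow> bool" where
  "monomial_ideal I \<longleftrightarrow> (\<exists>E. I = ideal_gen (mon ` E))"

definition associated_prime :: "('v, 'k::field) mpoly set \<Rightarrow> ('v, 'k) mpoly set \<Rightarrow> bool" where
  "associated_prime I P \<longleftrightarrow> is_prime_ideal P \<and> (\<exists>f. P = {g. g * f \<in> I})"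

definition minimal_prime :: "('v, 'k::field) mpoly set \<Rightarrow> ('v, 'k) mpoly set \<Rightarrow> bool" where
  "minimal_prime I P \<longleftrightarrow> is_prime_ideal P \<and> I \<subseteq> P \<and>
     (\<forall>Q. is_prime_ideal Q \<and> I \<subseteq> Q \<and> Q \<subseteq> P \<longrightarrow> Q = P)"

definition unmixed :: "('v, 'k::field) mpoly set \<Rightarrow> bool" where
  "unmixed I \<longleftrightarrow> (\<forall>P. associated_prime I P \<longrightarrow> minimal_prime I P)"

definition P_ideal :: "'v set \<Rightarrow> ('v, 'k::field) mpoly set" where
  "P_ideal F = ideal_gen (var ` (- F))"

definition Fam :: "('v, 'k::field) mpoly set \<Rightarrow> 'v set set" where
  "Fam I = {F. minimal_prime I (P_ideal F)}"

(* Primary component of I associated with a minimal prime P: the (unique) isolated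
  component I R_P <inter> R = {f. <exists>s <notin> P. s f <in> I}. *)
definition primary_component :: "('v, 'k::field) mpoly set \<Rightarrow> ('v, 'k) mpoly set \<Rightarrow> ('v, 'k) mpoly set" where
  "primary_component I P = {f. \<exists>s. s \<notin> P \<and> s * f \<in> I}"

definition comp_F :: "('v, 'k::field) mpoly set \<Rightarrow> 'v set \<Rightarrow> ('v, 'k) mpoly set" where
  "comp_F I F = primary_component I (P_ideal F)"

definition Gset :: "('v \<Rightarrow> int) \<Rightarrow> 'v set" where
  "Gset a = {i. a i < 0}"

definition pos_part :: "('v::finite \<Rightarrow> int) \<Rightarrow> ('v \<Rightarrow>\<^sub>0 nat)" where
  "pos_part a = Abs_poly_mapping (\<lambda>i. nat (a i))"

(* Membership of the Laurent monomial x^a in I R_F, R_F = R[x_i^{-1} | i <in> F]: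
  elements of I R_F are f / x^c with f <in> I and c supported on F, so x^a <in> I R_F iff
  x^(a+c) <in> I for some such c with a + c <ge> 0. *)
definition lmon_in_loc :: "('v::finite, 'k::field) mpoly set \<Rightarrow> 'v set \<Rightarrow> ('v \<Rightarrow> int) \<Rightarrow> bool" where
  "lmon_in_loc I F a \<longleftrightarrow> (\<exists>c :: 'v \<Rightarrow>\<^sub>0 nat. Poly_Mapping.keys c \<subseteq> F \<and>
      (\<forall>i. 0 \<le> a i + int (Poly_Mapping.lookup c i)) \<and>
      mon (Abs_poly_mapping (\<lambda>i. nat (a i + int (Poly_Mapping.lookup c i)))) \<in> I)"

definition degree_complex :: "('v::finite, 'k::field) mpoly set \<Rightarrow> ('v \<Rightarrow> int) \<Rightarrow> 'v set set" where
  "degree_complex I a = {F - Gset a | F. Gset a \<subseteq> F \<and> \<not> lmon_in_loc I F a}"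

definition facet :: "'v set set \<Rightarrow> 'v set \<Rightarrow> bool" where
  "facet \<Delta> G \<longleftrightarrow> G \<in> \<Delta> \<and> (\<forall>H\<in>\<Delta>. G \<subseteq> H \<longrightarrow> H = G)"

end

theory Submission
  imports Defs "HOL-Library.Countable"
begin

(* Let M be the set of exponents of monomials in I and b the positive part of a. When
  G_a \<subseteq> F, both x^a \<in> I R_F and x^b \<in> I_F say that b + c \<in> M for some c supported on F;
  so the faces of the degree complex are the F - G_a for the sets F \<supseteq> G_a where this fails,
  and its facets come from the maximal such F.
  If the condition fails for F then I \<subseteq> P_F, and P_F is prime. Hence, if P_F is a minimal prime
  and the condition also fails for some F' \<supseteq> F, then I \<subseteq> P_F' \<subseteq> P_F forces F' = F.
  Conversely, for maximal F the exponents w supported off F for which the condition still fails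
  for b + w are bounded; one of maximal total degree is pushed into the localization by every
  x_i with i \<notin> F, and this makes P_F a colon ideal (I : x^u), i.e. an associated prime, which
  is minimal because I is unmixed. *)

section \<open>Polynomial rings without zero divisors\<close>

lemma lookup_mult_pairs:
  "Poly_Mapping.lookup (f * g) k =
     (\<Sum>(a, b). Poly_Mapping.lookup f a * Poly_Mapping.lookup g b when k = a + b)"
  by transfer (simp add: prod_fun_unfold_prod)

lemma mult_neq_zero_if_ordered_embedding:
  fixes f g :: "'a::monoid_add \<Rightarrow>\<^sub>0 'b::semiring_no_zero_divisors"
    and h :: "'a \<Rightarrow> 'c::{ordered_cancel_comm_monoid_add, linorder}"
  assumes "inj h" and h_add: "\<And>x y. h (x + y) = h x + h y"
    and "f \<noteq> 0" "g \<noteq> 0"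
  shows "f * g \<noteq> 0"
proof -
  have "\<exists>a\<in>Poly_Mapping.keys p. \<forall>l\<in>Poly_Mapping.keys p. h l \<le> h a" if "p \<noteq> 0" for p :: "'a \<Rightarrow>\<^sub>0 'b"
  proof -
    have "Max (h ` Poly_Mapping.keys p) \<in> h ` Poly_Mapping.keys p" using that by (intro Max_in) auto
    then show ?thesis by (metis Max_ge finite_imageI finite_keys imageE image_eqI)
  qed
  then obtain a b where a: "a \<in> Poly_Mapping.keys f" "\<And>l. l \<in> Poly_Mapping.keys f \<Longrightarrow> h l \<le> h a"
    and b: "b \<in> Poly_Mapping.keys g" "\<And>l. l \<in> Poly_Mapping.keys g \<Longrightarrow> h l \<le> h b"
    using \<open>f \<noteq> 0\<close> \<open>g \<noteq> 0\<close> by metis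
  have top_unique: "(x, y) = (a, b)"
    if "x \<in> Poly_Mapping.keys f" "y \<in> Poly_Mapping.keys g" "a + b = x + y" for x y
  proof -
    have "h x + h y = h a + h b" using that(3) by (metis h_add)
    then have "h x = h a \<and> h y = h b"
      using a(2)[OF that(1)] b(2)[OF that(2)] add_less_le_mono add_le_less_mono
      by (metis order_le_less order_less_irrefl)
    then show ?thesis using \<open>inj h\<close> by (simp add: inj_eq)
  qed
  have "Poly_Mapping.lookup (f * g) (a + b) =
      (\<Sum>p. Poly_Mapping.lookup f a * Poly_Mapping.lookup g b when p = (a, b))"
    unfolding lookup_mult_pairs
    by (rule Sum_any.cong) (use top_unique in \<open>auto simp: when_def in_keys_iff split: if_splits\<close>)
  also have "\<dots> \<noteq> 0" using a(1) b(1) by (simp add: in_keys_iff)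
  finally show ?thesis by auto
qed

(* The library's integral domain instance needs linearly ordered variables; here the
  exponent monoid is embedded into nat \<Rightarrow>\<^sub>0 nat instead. *)
lemma mpoly_mult_neq_zero:
  fixes f g :: "('v::finite \<Rightarrow>\<^sub>0 nat) \<Rightarrow>\<^sub>0 'k::semiring_no_zero_divisors"
  assumes "f \<noteq> 0" "g \<noteq> 0"
  shows "f * g \<noteq> 0"
proof -
  define h :: "('v \<Rightarrow>\<^sub>0 nat) \<Rightarrow> nat \<Rightarrow>\<^sub>0 nat" where
    "h m = (\<Sum>v\<in>UNIV. Poly_Mapping.single (to_nat v) (Poly_Mapping.lookup m v))" for m
  have lookup_h: "Poly_Mapping.lookup (h m) (to_nat v) = Poly_Mapping.lookup m v" for m v
    by (simp add: h_def lookup_sum lookup_single when_def inj_eq[OF inj_to_nat])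
  have "inj h"
    by (rule injI, rule poly_mapping_eqI) (metis lookup_h)
  moreover have "h (x + y) = h x + h y" for x y
    by (simp add: h_def lookup_add single_add sum.distrib)
  ultimately show ?thesis using mult_neq_zero_if_ordered_embedding assms by blast
qed

section \<open>Monomial ideals\<close>

definition upclosure :: "('v \<Rightarrow>\<^sub>0 nat) set \<Rightarrow> ('v \<Rightarrow>\<^sub>0 nat) set" where
  "upclosure E = {e + d | e d. e \<in> E}"

lemma upclosure_add: "m \<in> upclosure E \<Longrightarrow> m + d \<in> upclosure E"
  unfolding upclosure_def using add.assoc by blast

lemma subset_upclosure: "E \<subseteq> upclosure E"
  unfolding upclosure_def by (metis (mono_tags, lifting) add_0_right mem_Collect_eq subsetI)

lemma upclosure_lookup_mono:
  assumes "x \<in> upclosure E" "\<And>j. Poly_Mapping.lookup x j \<le> Poly_Mapping.lookup y j"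
  shows "y \<in> upclosure E"
proof -
  have "y = x + (y - x)" using assms(2) by (intro poly_mapping_eqI) (simp add: lookup_add lookup_minus)
  then show ?thesis using upclosure_add[OF assms(1)] by metis
qed

lemma keys_mon [simp]: "Poly_Mapping.keys (mon e :: ('v, 'k::field) mpoly) = {e}"
  by (simp add: mon_def)

lemma mon_mult: "mon a * mon b = (mon (a + b) :: ('v, 'k::field) mpoly)"
  by (simp add: mon_def mult_single)

lemma is_ideal_keys_subset_upclosure:
  "is_ideal {f :: ('v, 'k::field) mpoly. Poly_Mapping.keys f \<subseteq> upclosure E}"
  unfolding is_ideal_def
proof (intro conjI ballI allI)
  fix f g :: "('v, 'k) mpoly"
  assume "f \<in> {f. Poly_Mapping.keys f \<subseteq> upclosure E}" "g \<in> {f. Poly_Mapping.keys f \<subseteq> upclosure E}"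
  then show "f + g \<in> {f. Poly_Mapping.keys f \<subseteq> upclosure E}" using keys_add[of f g] by auto
next
  fix r f :: "('v, 'k) mpoly"
  assume "f \<in> {f. Poly_Mapping.keys f \<subseteq> upclosure E}"
  then show "r * f \<in> {f. Poly_Mapping.keys f \<subseteq> upclosure E}"
    using keys_mult[of r f] upclosure_add by (fastforce simp: add.commute)
qed simp

lemma ideal_sum_mem:
  assumes "is_ideal K" "\<And>x. x \<in> A \<Longrightarrow> g x \<in> K"
  shows "sum g A \<in> K"
  using assms(2) by (induction A rule: infinite_finite_induct) (use assms(1) in \<open>auto simp: is_ideal_def\<close>)

lemma sum_single_lookup_keys:
  "(\<Sum>m\<in>Poly_Mapping.keys f. Poly_Mapping.single m (Poly_Mapping.lookup f m)) = f"
proof (rule poly_mapping_eqI)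
  fix k
  have "(\<Sum>m\<in>Poly_Mapping.keys f. Poly_Mapping.lookup (Poly_Mapping.single m (Poly_Mapping.lookup f m)) k)
      = (\<Sum>m\<in>Poly_Mapping.keys f. if m = k then Poly_Mapping.lookup f m else 0)"
    by (rule sum.cong) (auto simp: lookup_single when_def)
  also have "\<dots> = Poly_Mapping.lookup f k" by (simp add: in_keys_iff)
  finally show "Poly_Mapping.lookup (\<Sum>m\<in>Poly_Mapping.keys f. Poly_Mapping.single m (Poly_Mapping.lookup f m)) k
      = Poly_Mapping.lookup f k"
    by (simp add: lookup_sum)
qed

lemma ideal_gen_mon_eq:
  "ideal_gen (mon ` E) = {f :: ('v, 'k::field) mpoly. Poly_Mapping.keys f \<subseteq> upclosure E}"
proof
  have "mon ` E \<subseteq> {f :: ('v, 'k) mpoly. Poly_Mapping.keys f \<subseteq> upclosure E}"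
    using subset_upclosure[of E] by auto
  then show "ideal_gen (mon ` E) \<subseteq> {f :: ('v, 'k) mpoly. Poly_Mapping.keys f \<subseteq> upclosure E}"
    unfolding ideal_gen_def using is_ideal_keys_subset_upclosure by blast
next
  show "{f :: ('v, 'k) mpoly. Poly_Mapping.keys f \<subseteq> upclosure E} \<subseteq> ideal_gen (mon ` E)"
  proof (clarsimp simp: ideal_gen_def)
    fix f :: "('v, 'k) mpoly" and K :: "('v, 'k) mpoly set"
    assume f: "Poly_Mapping.keys f \<subseteq> upclosure E" and K: "is_ideal K" "mon ` E \<subseteq> K"
    have "Poly_Mapping.single m (Poly_Mapping.lookup f m) \<in> K" if m: "m \<in> Poly_Mapping.keys f" for m
    proof -
      obtain e d where "e \<in> E" "m = e + d" using f m by (auto simp: upclosure_def)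
      then have "Poly_Mapping.single m (Poly_Mapping.lookup f m) = Poly_Mapping.single d (Poly_Mapping.lookup f m) * mon e"
        by (simp add: mon_def mult_single add.commute)
      then show ?thesis using K \<open>e \<in> E\<close> by (auto simp: is_ideal_def)
    qed
    then show "f \<in> K" using ideal_sum_mem[OF K(1)] sum_single_lookup_keys by metis
  qed
qed

lemma mon_mem_ideal_gen_mon_iff:
  "mon m \<in> (ideal_gen (mon ` E) :: ('v, 'k::field) mpoly set) \<longleftrightarrow> m \<in> upclosure E"
  by (simp add: ideal_gen_mon_eq)

section \<open>The monomial primes P_F\<close>

lemma upclosure_single_one_iff:
  "m \<in> upclosure ((\<lambda>i. Poly_Mapping.single i 1) ` (- F)) \<longleftrightarrow> \<not> Poly_Mapping.keys m \<subseteq> F"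
proof
  assume "m \<in> upclosure ((\<lambda>i. Poly_Mapping.single i 1) ` (- F))"
  then obtain i d where "i \<notin> F" "m = Poly_Mapping.single i 1 + d" by (auto simp: upclosure_def)
  then have "i \<in> Poly_Mapping.keys m" by (simp add: in_keys_iff lookup_add)
  with \<open>i \<notin> F\<close> show "\<not> Poly_Mapping.keys m \<subseteq> F" by auto
next
  assume "\<not> Poly_Mapping.keys m \<subseteq> F"
  then obtain i where i: "i \<in> Poly_Mapping.keys m" "i \<notin> F" by auto
  have "m = Poly_Mapping.single i 1 + (m - Poly_Mapping.single i 1)"
    using i(1) by (intro poly_mapping_eqI) (auto simp: lookup_add lookup_minus lookup_single when_def in_keys_iff)
  then show "m \<in> upclosure ((\<lambda>i. Poly_Mapping.single i 1) ` (- F))"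
    using i(2) unfolding upclosure_def by blast
qed

lemma P_ideal_eq:
  "P_ideal F = {f :: ('v, 'k::field) mpoly. Poly_Mapping.keys f \<subseteq> upclosure ((\<lambda>i. Poly_Mapping.single i 1) ` (- F))}"
proof -
  have "var ` (- F) = (mon ` (\<lambda>i. Poly_Mapping.single i 1) ` (- F) :: ('v, 'k) mpoly set)"
    by (auto simp: var_def)
  then show ?thesis unfolding P_ideal_def by (simp add: ideal_gen_mon_eq)
qed

lemma mem_P_ideal_iff:
  "f \<in> P_ideal F \<longleftrightarrow> (\<forall>m\<in>Poly_Mapping.keys f. \<not> Poly_Mapping.keys m \<subseteq> F)"
  unfolding P_ideal_eq using upclosure_single_one_iff by blast

lemma mon_mem_P_ideal_iff:
  "(mon m :: ('v, 'k::field) mpoly) \<in> P_ideal F \<longleftrightarrow> \<not> Poly_Mapping.keys m \<subseteq> F"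
  by (simp add: mem_P_ideal_iff)

lemma is_ideal_P_ideal: "is_ideal (P_ideal F :: ('v, 'k::field) mpoly set)"
  unfolding P_ideal_eq by (rule is_ideal_keys_subset_upclosure)

lemma P_ideal_subset_iff:
  "(P_ideal F' :: ('v, 'k::field) mpoly set) \<subseteq> P_ideal F \<longleftrightarrow> F \<subseteq> F'"
proof
  assume sub: "(P_ideal F' :: ('v, 'k) mpoly set) \<subseteq> P_ideal F"
  show "F \<subseteq> F'"
  proof (rule ccontr)
    assume "\<not> F \<subseteq> F'"
    then obtain i where "i \<in> F" "i \<notin> F'" by blast
    then have "(var i :: ('v, 'k) mpoly) \<in> P_ideal F'" "(var i :: ('v, 'k) mpoly) \<notin> P_ideal F"
      by (simp_all add: var_def mon_mem_P_ideal_iff)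
    with sub show False by blast
  qed
next
  assume "F \<subseteq> F'"
  then show "(P_ideal F' :: ('v, 'k) mpoly set) \<subseteq> P_ideal F"
    unfolding mem_P_ideal_iff subset_iff by blast
qed

lemma is_ideal_diff:
  "is_ideal K \<Longrightarrow> x \<in> K \<Longrightarrow> y \<in> K \<Longrightarrow> x - y \<in> (K :: ('v, 'k::field) mpoly set)"
  unfolding is_ideal_def by (metis diff_conv_add_uminus mult_minus1)

(* Modulo P_F a polynomial agrees with its part on_F in the variables x_i, i \<in> F; these parts
  form a subring without zero divisors that meets P_F only in 0. *)
lemma is_prime_ideal_P_ideal: "is_prime_ideal (P_ideal F :: ('v::finite, 'k::field) mpoly set)"
  unfolding is_prime_ideal_def
proof (intro conjI allI impI)
  show "is_ideal (P_ideal F :: ('v, 'k) mpoly set)" by (rule is_ideal_P_ideal)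
  have "(1 :: ('v, 'k) mpoly) \<notin> P_ideal F" by (simp add: mem_P_ideal_iff)
  then show "P_ideal F \<noteq> (UNIV :: ('v, 'k) mpoly set)" by auto
next
  fix f g :: "('v, 'k) mpoly"
  assume fg: "f * g \<in> P_ideal F"
  define on_F :: "('v, 'k) mpoly \<Rightarrow> ('v, 'k) mpoly" where
    "on_F p = Abs_poly_mapping (\<lambda>m. Poly_Mapping.lookup p m when Poly_Mapping.keys m \<subseteq> F)" for p
  have lookup_on_F: "Poly_Mapping.lookup (on_F p) m = (Poly_Mapping.lookup p m when Poly_Mapping.keys m \<subseteq> F)" for p m
  proof -
    have "finite {m. (Poly_Mapping.lookup p m when Poly_Mapping.keys m \<subseteq> F) \<noteq> 0}"
      by (rule finite_subset[of _ "Poly_Mapping.keys p"]) (auto simp: in_keys_iff)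
    then show ?thesis unfolding on_F_def by simp
  qed
  have keys_on_F: "Poly_Mapping.keys (on_F p) \<subseteq> {m. Poly_Mapping.keys m \<subseteq> F}" for p
  proof
    fix m assume "m \<in> Poly_Mapping.keys (on_F p)"
    then have "Poly_Mapping.lookup (on_F p) m \<noteq> 0" by (simp add: in_keys_iff)
    then show "m \<in> {m. Poly_Mapping.keys m \<subseteq> F}" by (simp add: lookup_on_F when_def split: if_splits)
  qed
  have rest: "p - on_F p \<in> P_ideal F" for p
    unfolding mem_P_ideal_iff
  proof (intro ballI notI)
    fix m assume "m \<in> Poly_Mapping.keys (p - on_F p)" "Poly_Mapping.keys m \<subseteq> F"
    then show False by (simp add: lookup_minus lookup_on_F flip: lookup_not_eq_zero_eq_in_keys)
  qed
  have P: "is_ideal (P_ideal F :: ('v, 'k) mpoly set)" by (rule is_ideal_P_ideal)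
  have "on_F f * on_F g = f * g - (on_F f * (g - on_F g) + (f - on_F f) * g)"
    by (simp add: algebra_simps)
  also have "\<dots> \<in> P_ideal F"
  proof (rule is_ideal_diff[OF P fg])
    have "on_F f * (g - on_F g) \<in> P_ideal F" "g * (f - on_F f) \<in> P_ideal F"
      using P rest unfolding is_ideal_def by blast+
    then show "on_F f * (g - on_F g) + (f - on_F f) * g \<in> P_ideal F"
      using P unfolding is_ideal_def by (simp add: mult.commute)
  qed
  finally have "on_F f * on_F g \<in> P_ideal F" .
  moreover have "Poly_Mapping.keys (on_F f * on_F g) \<subseteq> {m. Poly_Mapping.keys m \<subseteq> F}"
  proof
    fix m assume "m \<in> Poly_Mapping.keys (on_F f * on_F g)"
    then obtain x y where "m = x + y" "x \<in> Poly_Mapping.keys (on_F f)" "y \<in> Poly_Mapping.keys (on_F g)"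
      using keys_mult by blast
    then show "m \<in> {m. Poly_Mapping.keys m \<subseteq> F}" using keys_on_F keys_add[of x y] by blast
  qed
  ultimately have "Poly_Mapping.keys (on_F f * on_F g) = {}"
    unfolding mem_P_ideal_iff by blast
  then have "on_F f * on_F g = 0" by simp
  then have "on_F f = 0 \<or> on_F g = 0" using mpoly_mult_neq_zero by blast
  then show "f \<in> P_ideal F \<or> g \<in> P_ideal F" using rest by (metis diff_zero)
qed

section \<open>Localization of monomial ideals\<close>

lemma lookup_mult_mon:
  "Poly_Mapping.lookup (s * mon u) (m + u) = Poly_Mapping.lookup (s :: ('v, 'k::field) mpoly) m"
proof -
  have eq: "(\<lambda>l. Poly_Mapping.lookup s l * (\<Sum>q. Poly_Mapping.lookup (mon u :: ('v, 'k) mpoly) q when m + u = l + q))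
      = (\<lambda>l. if l = m then Poly_Mapping.lookup s l else 0)"
  proof
    fix l
    have "(\<Sum>q. Poly_Mapping.lookup (mon u :: ('v, 'k) mpoly) q when m + u = l + q)
        = (\<Sum>q. (1 when l = m) when q = u)"
      by (rule Sum_any.cong) (auto simp: mon_def lookup_single when_def)
    then show "Poly_Mapping.lookup s l * (\<Sum>q. Poly_Mapping.lookup (mon u :: ('v, 'k) mpoly) q when m + u = l + q)
        = (if l = m then Poly_Mapping.lookup s l else 0)"
      by (simp add: when_def)
  qed
  show ?thesis unfolding lookup_mult eq by simp
qed

lemma keys_mult_mon:
  "Poly_Mapping.keys (s * mon u) = (\<lambda>m. m + u) ` Poly_Mapping.keys (s :: ('v, 'k::field) mpoly)"
proof
  show "Poly_Mapping.keys (s * mon u) \<subseteq> (\<lambda>m. m + u) ` Poly_Mapping.keys s"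
    using keys_mult[of s "mon u"] by auto
  show "(\<lambda>m. m + u) ` Poly_Mapping.keys s \<subseteq> Poly_Mapping.keys (s * mon u)"
    by (auto simp: in_keys_iff lookup_mult_mon)
qed

(* For the exponent set M of a monomial ideal I, this says x^b \<in> I R_F. *)
definition in_localization :: "('v \<Rightarrow>\<^sub>0 nat) set \<Rightarrow> 'v set \<Rightarrow> ('v \<Rightarrow>\<^sub>0 nat) \<Rightarrow> bool" where
  "in_localization M F b \<longleftrightarrow> (\<exists>c. Poly_Mapping.keys c \<subseteq> F \<and> b + c \<in> M)"

lemma lmon_in_loc_iff_in_localization:
  fixes a :: "'v::finite \<Rightarrow> int"
  assumes "Gset a \<subseteq> F"
  shows "lmon_in_loc (ideal_gen (mon ` E) :: ('v, 'k::field) mpoly set) F a \<longleftrightarrow>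
    in_localization (upclosure E) F (pos_part a)"
proof
  assume "lmon_in_loc (ideal_gen (mon ` E) :: ('v, 'k) mpoly set) F a"
  then obtain c where c: "Poly_Mapping.keys c \<subseteq> F" "\<And>i. 0 \<le> a i + int (Poly_Mapping.lookup c i)"
    "Abs_poly_mapping (\<lambda>i. nat (a i + int (Poly_Mapping.lookup c i))) \<in> upclosure E"
    unfolding lmon_in_loc_def mon_mem_ideal_gen_mon_iff by blast
  define d :: "'v \<Rightarrow>\<^sub>0 nat" where
    "d = Abs_poly_mapping (\<lambda>i. nat (a i + int (Poly_Mapping.lookup c i)) - nat (a i))"
  have "Abs_poly_mapping (\<lambda>i. nat (a i + int (Poly_Mapping.lookup c i))) = pos_part a + d"
    using c(2) by (intro poly_mapping_eqI) (auto simp: d_def pos_part_def lookup_add)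
  moreover have "Poly_Mapping.keys d \<subseteq> F"
  proof
    fix i assume "i \<in> Poly_Mapping.keys d"
    then have "Poly_Mapping.lookup c i \<noteq> 0 \<or> a i < 0" by (auto simp: d_def in_keys_iff)
    then show "i \<in> F" using c(1) assms by (auto simp: in_keys_iff Gset_def)
  qed
  ultimately show "in_localization (upclosure E) F (pos_part a)"
    using c(3) unfolding in_localization_def by auto
next
  assume "in_localization (upclosure E) F (pos_part a)"
  then obtain c where c: "Poly_Mapping.keys c \<subseteq> F" "pos_part a + c \<in> upclosure E"
    unfolding in_localization_def by blast
  define c' :: "'v \<Rightarrow>\<^sub>0 nat" where "c' = Abs_poly_mapping (\<lambda>i. Poly_Mapping.lookup c i + nat (- a i))"
  have "Poly_Mapping.keys c' \<subseteq> F"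
  proof
    fix i assume "i \<in> Poly_Mapping.keys c'"
    then have "Poly_Mapping.lookup c i \<noteq> 0 \<or> a i < 0" by (auto simp: c'_def in_keys_iff)
    then show "i \<in> F" using c(1) assms by (auto simp: in_keys_iff Gset_def)
  qed
  moreover have "\<forall>i. 0 \<le> a i + int (Poly_Mapping.lookup c' i)" by (auto simp: c'_def)
  moreover have "Abs_poly_mapping (\<lambda>i. nat (a i + int (Poly_Mapping.lookup c' i))) = pos_part a + c"
    by (intro poly_mapping_eqI) (auto simp: c'_def pos_part_def lookup_add)
  ultimately show "lmon_in_loc (ideal_gen (mon ` E) :: ('v, 'k) mpoly set) F a"
    using c(2) unfolding lmon_in_loc_def mon_mem_ideal_gen_mon_iff by metis
qed

lemma mon_mem_comp_F_iff_in_localization: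
  "mon b \<in> comp_F (ideal_gen (mon ` E) :: ('v, 'k::field) mpoly set) F \<longleftrightarrow>
    in_localization (upclosure E) F b"
proof
  assume "mon b \<in> comp_F (ideal_gen (mon ` E) :: ('v, 'k) mpoly set) F"
  then obtain s :: "('v, 'k) mpoly" where s: "s \<notin> P_ideal F" "s * mon b \<in> ideal_gen (mon ` E)"
    unfolding comp_F_def primary_component_def by blast
  then obtain m where m: "m \<in> Poly_Mapping.keys s" "Poly_Mapping.keys m \<subseteq> F"
    by (auto simp: mem_P_ideal_iff)
  have "m + b \<in> upclosure E"
    using s(2) m(1) by (auto simp: ideal_gen_mon_eq keys_mult_mon)
  then show "in_localization (upclosure E) F b"
    unfolding in_localization_def using m(2) by (auto simp: add.commute)
next
  assume "in_localization (upclosure E) F b"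
  then obtain c where c: "Poly_Mapping.keys c \<subseteq> F" "b + c \<in> upclosure E"
    unfolding in_localization_def by blast
  have "(mon c :: ('v, 'k) mpoly) \<notin> P_ideal F" using c(1) by (simp add: mon_mem_P_ideal_iff)
  moreover have "mon c * mon b \<in> (ideal_gen (mon ` E) :: ('v, 'k) mpoly set)"
    using c(2) by (simp add: mon_mult mon_mem_ideal_gen_mon_iff add.commute)
  ultimately show "mon b \<in> comp_F (ideal_gen (mon ` E) :: ('v, 'k) mpoly set) F"
    unfolding comp_F_def primary_component_def by blast
qed

lemma ideal_gen_mon_subset_P_ideal:
  assumes "\<not> in_localization (upclosure E) F b"
  shows "(ideal_gen (mon ` E) :: ('v, 'k::field) mpoly set) \<subseteq> P_ideal F"
proof (clarsimp simp: ideal_gen_mon_eq mem_P_ideal_iff)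
  fix f :: "('v, 'k) mpoly" and m
  assume "Poly_Mapping.keys f \<subseteq> upclosure E" "m \<in> Poly_Mapping.keys f" "Poly_Mapping.keys m \<subseteq> F"
  then have "b + m \<in> upclosure E" using upclosure_add[of m E b] by (auto simp: add.commute)
  with \<open>Poly_Mapping.keys m \<subseteq> F\<close> assms show False unfolding in_localization_def by blast
qed

section \<open>Associated primes of monomial ideals\<close>

lemma in_localization_if_exponent_exceeds:
  assumes "Poly_Mapping.keys c \<subseteq> insert j F" "b + c \<in> upclosure E"
    and "Poly_Mapping.lookup c j \<le> Poly_Mapping.lookup w j"
  shows "in_localization (upclosure E) F (b + w)"
proof -
  define c' where "c' = c - Poly_Mapping.single j (Poly_Mapping.lookup c j)"
  have "Poly_Mapping.keys c' \<subseteq> F"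
  proof
    fix k assume "k \<in> Poly_Mapping.keys c'"
    then have "k \<noteq> j" "k \<in> Poly_Mapping.keys c"
      by (auto simp: c'_def in_keys_iff lookup_minus lookup_single when_def split: if_splits)
    then show "k \<in> F" using assms(1) by blast
  qed
  moreover have "b + w + c' \<in> upclosure E"
  proof (rule upclosure_lookup_mono[OF assms(2)])
    fix k
    show "Poly_Mapping.lookup (b + c) k \<le> Poly_Mapping.lookup (b + w + c') k"
      using assms(3) by (cases "k = j") (auto simp: c'_def lookup_add lookup_minus lookup_single)
  qed
  ultimately show ?thesis unfolding in_localization_def by (auto simp: add.assoc)
qed

(* By the previous lemma, the exponents w supported off F with b + w outside the localization
  are bounded coordinatewise, so one of maximal total degree exists. *)
lemma obtain_saturated_exponent:
  fixes b :: "'v::finite \<Rightarrow>\<^sub>0 nat"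
  assumes "\<not> in_localization (upclosure E) F b"
    and "\<And>i. i \<notin> F \<Longrightarrow> in_localization (upclosure E) (insert i F) b"
  obtains w where "\<not> in_localization (upclosure E) F (b + w)"
    and "\<And>i. i \<notin> F \<Longrightarrow> in_localization (upclosure E) F (b + w + Poly_Mapping.single i 1)"
proof -
  obtain c where c: "\<And>i. i \<notin> F \<Longrightarrow> Poly_Mapping.keys (c i) \<subseteq> insert i F \<and> b + c i \<in> upclosure E"
    using assms(2) unfolding in_localization_def by metis
  define N where "N = (\<Sum>i\<in>- F. Poly_Mapping.lookup (c i) i)"
  define W where "W = {w. Poly_Mapping.keys w \<subseteq> - F \<and> \<not> in_localization (upclosure E) F (b + w)}"
  define total_degree :: "('v \<Rightarrow>\<^sub>0 nat) \<Rightarrow> nat" where "total_degree w = (\<Sum>j\<in>UNIV. Poly_Mapping.lookup w j)" for w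
  have bounded: "Poly_Mapping.lookup w j \<le> N" if "w \<in> W" for w j
  proof (cases "j \<in> F")
    case True
    then have "j \<notin> Poly_Mapping.keys w" using that by (auto simp: W_def)
    then show ?thesis by (simp add: in_keys_iff)
  next
    case False
    then have "Poly_Mapping.lookup w j < Poly_Mapping.lookup (c j) j"
      using that c[OF False] in_localization_if_exponent_exceeds[of "c j" j F b E w]
      by (force simp: W_def)
    also have "\<dots> \<le> N" unfolding N_def using False by (intro member_le_sum) auto
    finally show ?thesis by simp
  qed
  have "total_degree w < card (UNIV :: 'v set) * N + 1" if "w \<in> W" for w
    using sum_bounded_above[of UNIV "Poly_Mapping.lookup w" N] bounded[OF that]
    by (simp add: total_degree_def)
  moreover have "0 \<in> W" using assms(1) by (simp add: W_def)
  ultimately obtain w where w: "w \<in> W" "\<And>y. y \<in> W \<Longrightarrow> total_degree y \<le> total_degree w"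
    using ex_has_greatest_nat[of "\<lambda>w. w \<in> W" 0 total_degree] by blast
  have "in_localization (upclosure E) F (b + w + Poly_Mapping.single i 1)" if "i \<notin> F" for i
  proof (rule ccontr)
    assume "\<not> in_localization (upclosure E) F (b + w + Poly_Mapping.single i 1)"
    moreover have "Poly_Mapping.keys (w + Poly_Mapping.single i 1) \<subseteq> - F"
      using keys_add[of w "Poly_Mapping.single i 1"] w(1) that by (auto simp: W_def)
    ultimately have "w + Poly_Mapping.single i 1 \<in> W" by (simp add: W_def add.assoc)
    then have "total_degree (w + Poly_Mapping.single i 1) \<le> total_degree w" by (rule w(2))
    moreover have "total_degree (w + Poly_Mapping.single i 1) = total_degree w + 1"
      by (simp add: total_degree_def lookup_add sum.distrib lookup_single when_def)
    ultimately show False by simp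
  qed
  with w(1) show thesis using that by (auto simp: W_def)
qed

lemma associated_prime_P_ideal_if_saturated:
  assumes "\<not> in_localization (upclosure E) F v"
    and "\<And>i. i \<notin> F \<Longrightarrow> in_localization (upclosure E) F (v + Poly_Mapping.single i 1)"
  shows "associated_prime (ideal_gen (mon ` E)) (P_ideal F :: ('v::finite, 'k::field) mpoly set)"
proof -
  obtain c where c: "\<And>i. i \<notin> F \<Longrightarrow> Poly_Mapping.keys (c i) \<subseteq> F \<and> v + Poly_Mapping.single i 1 + c i \<in> upclosure E"
    using assms(2) unfolding in_localization_def by metis
  define C where "C = (\<Sum>i\<in>- F. c i)"
  have keys_C: "Poly_Mapping.keys C \<subseteq> F" unfolding C_def using keys_sum[of c "- F"] c by blast
  define u where "u = v + C"
    \<comment> \<open>x^u carries the witnesses for all i \<notin> F at once\<close>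
  have "P_ideal F = {g :: ('v, 'k) mpoly. g * mon u \<in> ideal_gen (mon ` E)}"
  proof (intro equalityI subsetI)
    fix g :: "('v, 'k) mpoly" assume g: "g \<in> P_ideal F"
    have "m + u \<in> upclosure E" if m: "m \<in> Poly_Mapping.keys g" for m
    proof -
      obtain i where i: "i \<in> Poly_Mapping.keys m" "i \<notin> F" using g m by (auto simp: mem_P_ideal_iff)
      show ?thesis
      proof (rule upclosure_lookup_mono)
        show "v + Poly_Mapping.single i 1 + c i \<in> upclosure E" using c[OF i(2)] by simp
      next
        fix j
        have "Poly_Mapping.lookup (c i) j \<le> Poly_Mapping.lookup C j"
          unfolding C_def lookup_sum using i(2) by (intro member_le_sum) auto
        moreover have "Poly_Mapping.lookup (Poly_Mapping.single i 1) j \<le> Poly_Mapping.lookup m j"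
          using i(1) by (auto simp: lookup_single when_def in_keys_iff)
        ultimately show "Poly_Mapping.lookup (v + Poly_Mapping.single i 1 + c i) j \<le> Poly_Mapping.lookup (m + u) j"
          by (simp add: u_def lookup_add)
      qed
    qed
    then show "g \<in> {g. g * mon u \<in> ideal_gen (mon ` E)}" by (auto simp: ideal_gen_mon_eq keys_mult_mon)
  next
    fix g :: "('v, 'k) mpoly" assume "g \<in> {g. g * mon u \<in> ideal_gen (mon ` E)}"
    then have gu: "g * mon u \<in> ideal_gen (mon ` E)" by simp
    show "g \<in> P_ideal F"
    proof (rule ccontr)
      assume "g \<notin> P_ideal F"
      then obtain m where m: "m \<in> Poly_Mapping.keys g" "Poly_Mapping.keys m \<subseteq> F"
        by (auto simp: mem_P_ideal_iff)
      have "v + (C + m) \<in> upclosure E"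
        using gu m(1) by (auto simp: ideal_gen_mon_eq keys_mult_mon u_def ac_simps)
      moreover have "Poly_Mapping.keys (C + m) \<subseteq> F" using keys_add[of C m] keys_C m(2) by blast
      ultimately show False using assms(1) unfolding in_localization_def by blast
    qed
  qed
  then show ?thesis unfolding associated_prime_def using is_prime_ideal_P_ideal by blast
qed

lemma maximal_nonlocalizing_iff_minimal_prime:
  fixes b :: "'v::finite \<Rightarrow>\<^sub>0 nat"
  assumes unmixed: "unmixed (ideal_gen (mon ` E) :: ('v, 'k::field) mpoly set)"
    and b: "\<not> in_localization (upclosure E) F b"
  shows "(\<forall>F'. F \<subseteq> F' \<longrightarrow> \<not> in_localization (upclosure E) F' b \<longrightarrow> F' = F) \<longleftrightarrow>
    minimal_prime (ideal_gen (mon ` E) :: ('v, 'k) mpoly set) (P_ideal F)"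
proof
  assume maximal: "\<forall>F'. F \<subseteq> F' \<longrightarrow> \<not> in_localization (upclosure E) F' b \<longrightarrow> F' = F"
  have "in_localization (upclosure E) (insert i F) b" if "i \<notin> F" for i
    using maximal that by blast
  then obtain w where "\<not> in_localization (upclosure E) F (b + w)"
    "\<And>i. i \<notin> F \<Longrightarrow> in_localization (upclosure E) F (b + w + Poly_Mapping.single i 1)"
    using obtain_saturated_exponent[OF b] by blast
  then have "associated_prime (ideal_gen (mon ` E) :: ('v, 'k) mpoly set) (P_ideal F)"
    by (rule associated_prime_P_ideal_if_saturated)
  with unmixed show "minimal_prime (ideal_gen (mon ` E) :: ('v, 'k) mpoly set) (P_ideal F)"
    unfolding unmixed_def by blast
next
  assume minimal: "minimal_prime (ideal_gen (mon ` E) :: ('v, 'k) mpoly set) (P_ideal F)"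
  show "\<forall>F'. F \<subseteq> F' \<longrightarrow> \<not> in_localization (upclosure E) F' b \<longrightarrow> F' = F"
  proof (intro allI impI)
    fix F' assume "F \<subseteq> F'" "\<not> in_localization (upclosure E) F' b"
    then have "(ideal_gen (mon ` E) :: ('v, 'k) mpoly set) \<subseteq> P_ideal F'" "(P_ideal F' :: ('v, 'k) mpoly set) \<subseteq> P_ideal F"
      by (simp_all add: ideal_gen_mon_subset_P_ideal P_ideal_subset_iff)
    then have "(P_ideal F' :: ('v, 'k) mpoly set) = P_ideal F"
      using minimal is_prime_ideal_P_ideal unfolding minimal_prime_def by blast
    then show "F' = F" using P_ideal_subset_iff by (metis subset_antisym order_refl)
  qed
qed

section \<open>Facets of the degree complex\<close>

lemma facet_image_minus_iff:
  assumes "\<And>F'. F' \<in> S \<Longrightarrow> G \<subseteq> F'" "G \<subseteq> F"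
  shows "facet ((\<lambda>F'. F' - G) ` S) (F - G) \<longleftrightarrow> F \<in> S \<and> (\<forall>F'\<in>S. F \<subseteq> F' \<longrightarrow> F' = F)"
proof -
  have eq_iff: "F' - G = F - G \<longleftrightarrow> F' = F" if "F' \<in> S" for F'
    using assms(1)[OF that] assms(2) by (metis Diff_partition)
  have subset_iff: "F - G \<subseteq> F' - G \<longleftrightarrow> F \<subseteq> F'" if "F' \<in> S" for F'
    using assms(1)[OF that] assms(2) by blast
  have "F - G \<in> (\<lambda>F'. F' - G) ` S \<longleftrightarrow> F \<in> S"
    using eq_iff by (auto simp: image_iff)
  moreover have "(\<forall>H\<in>(\<lambda>F'. F' - G) ` S. F - G \<subseteq> H \<longrightarrow> H = F - G) \<longleftrightarrow> (\<forall>F'\<in>S. F \<subseteq> F' \<longrightarrow> F' = F)"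
    using eq_iff subset_iff by simp
  ultimately show ?thesis unfolding facet_def by blast
qed

lemma degree_complex_eq_image:
  "degree_complex I a = (\<lambda>F. F - Gset a) ` {F. Gset a \<subseteq> F \<and> \<not> lmon_in_loc I F a}"
  unfolding degree_complex_def by (rule setcompr_eq_image)

theorem proposition1p6:
  fixes I :: "('v::finite, 'k::field) mpoly set"
    and a :: "'v \<Rightarrow> int"
    and F :: "'v set"
  assumes "monomial_ideal I"
    and "unmixed I"
    and "Gset a \<subseteq> F"
  shows "facet (degree_complex I a) (F - Gset a) \<longleftrightarrow>
         F \<in> Fam I \<and> mon (pos_part a) \<notin> comp_F I F"
proof -
  obtain E where I: "I = ideal_gen (mon ` E)" using assms(1) unfolding monomial_ideal_def by blast
  let ?nonloc = "\<lambda>F. \<not> in_localization (upclosure E) F (pos_part a)"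
  define S where "S = {F. Gset a \<subseteq> F \<and> ?nonloc F}"
  have "degree_complex I a = (\<lambda>F. F - Gset a) ` S"
    unfolding degree_complex_eq_image I S_def using lmon_in_loc_iff_in_localization by blast
  then have "facet (degree_complex I a) (F - Gset a) \<longleftrightarrow> F \<in> S \<and> (\<forall>F'\<in>S. F \<subseteq> F' \<longrightarrow> F' = F)"
    using facet_image_minus_iff[of S "Gset a" F] assms(3) by (simp add: S_def)
  also have "\<dots> \<longleftrightarrow> ?nonloc F \<and> (\<forall>F'. F \<subseteq> F' \<longrightarrow> ?nonloc F' \<longrightarrow> F' = F)"
    unfolding S_def using assms(3) by (blast intro: order_trans)
  also have "\<dots> \<longleftrightarrow> ?nonloc F \<and> minimal_prime I (P_ideal F)"
    using maximal_nonlocalizing_iff_minimal_prime assms(2) unfolding I by blast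
  finally show ?thesis
    unfolding I Fam_def mon_mem_comp_F_iff_in_localization by blast
qed

end
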